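(* Let $X$ be a topological space and assume that for each sequence $(\mathcal{U}_n:n\in\mathbb{N})$ of $\omega$-covers of $X$ there are a positive integer $k$ and a sequence $(\mathcal{F}_n:n\in\mathbb{N})$ such that for each $n$, $\mathcal{F}_n\subseteq\mathcal{U}_n$ and $|\mathcal{F}_n|\le k$, and $\bigcup\{\mathcal{F}_n:n\in\mathbb{N}\}$ is an $\omega$-cover of $X$. Then $\textsf{S}_1(\Omega,\Omega)$ holds.
   Context: $\Omega$: the set of $\omega$-covers of $X$, i.e. open covers $\mathcal{U}$ with $X\notin\mathcal{U}$ such that every finite subset of $X$ lies in some member. $\textsf{S}_1(\Omega,\Omega)$: for every sequence $(\mathcal{U}_n)$ of $\omega$-covers there are $U_n\in\mathcal{U}_n$ such that $\{U_n:n\in\mathbb{N}\}$ is an $\omega$-cover. *)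

theory Defs
  imports "HOL-Analysis.Analysis"
begin

definition omega_cover :: "'a topology \<Rightarrow> 'a set set \<Rightarrow> bool" where
  "omega_cover T \<U> \<longleftrightarrow>
     (\<forall>U\<in>\<U>. openin T U) \<and> topspace T \<notin> \<U> \<and>
     (\<forall>F. finite F \<and> F \<subseteq> topspace T \<longrightarrow> (\<exists>U\<in>\<U>. F \<subseteq> U))"

definition S1_Omega_Omega :: "'a topology \<Rightarrow> bool" where
  "S1_Omega_Omega T \<longleftrightarrow>
     (\<forall>\<U> :: nat \<Rightarrow> 'a set set. (\<forall>n. omega_cover T (\<U> n)) \<longrightarrow>
        (\<exists>U :: nat \<Rightarrow> 'a set. (\<forall>n. U n \<in> \<U> n) \<and> omega_cover T (range U)))"

end

theory Submission
  imports Defs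
begin

text \<open>Given \<omega>-covers \<open>\<U>\<^sub>m\<close>, re-index them as \<open>\<U>\<^sub>\<langle>n,i\<rangle>\<close> and let the \<open>n\<close>-th auxiliary
\<omega>-cover consist of the intersections \<open>U\<^sub>0 \<inter> \<dots> \<inter> U\<^sub>n\<close> with \<open>U\<^sub>i \<in> \<U>\<^sub>\<langle>n,i\<rangle>\<close>. The hypothesis yields
at most \<open>k\<close> such intersections in each block \<open>n\<close>. For \<open>n \<ge> k\<close> there are at least as many
coordinates as chosen sets, so each chosen set can be assigned its own coordinate \<open>i\<close>, and
selecting its factor \<open>U\<^sub>i\<close> from \<open>\<U>\<^sub>\<langle>n,i\<rangle>\<close> gives a set containing it. Discarding the finitely
many sets chosen in the blocks \<open>n < k\<close> still leaves an \<omega>-cover, and it is refined by the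
selected sets, which therefore form an \<omega>-cover themselves.\<close>

lemma omega_cover_nonempty: "omega_cover T \<U> \<Longrightarrow> \<U> \<noteq> {}"
  unfolding omega_cover_def by blast

lemma omega_cover_INT:
  assumes "finite I" "I \<noteq> {}" and om: "\<And>i. i \<in> I \<Longrightarrow> omega_cover T (\<U> i)"
  shows "omega_cover T {\<Inter> (f ` I) | f. \<forall>i\<in>I. f i \<in> \<U> i}"
  unfolding omega_cover_def
proof (intro conjI ballI allI impI)
  fix W assume "W \<in> {\<Inter> (f ` I) | f. \<forall>i\<in>I. f i \<in> \<U> i}"
  with om show "openin T W"
    using \<open>finite I\<close> \<open>I \<noteq> {}\<close> by (auto simp: omega_cover_def)
next
  show "topspace T \<notin> {\<Inter> (f ` I) | f. \<forall>i\<in>I. f i \<in> \<U> i}"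
  proof
    assume "topspace T \<in> {\<Inter> (f ` I) | f. \<forall>i\<in>I. f i \<in> \<U> i}"
    then obtain f where top: "topspace T = \<Inter> (f ` I)" and f: "\<forall>i\<in>I. f i \<in> \<U> i"
      by blast
    obtain i where i: "i \<in> I" using \<open>I \<noteq> {}\<close> by blast
    have "f i = topspace T"
    proof
      show "f i \<subseteq> topspace T"
        using f om[OF i] i by (simp add: omega_cover_def openin_subset)
      show "topspace T \<subseteq> f i" unfolding top using i by blast
    qed
    moreover have "f i \<in> \<U> i" using f i by blast
    ultimately show False using om[OF i] by (simp add: omega_cover_def)
  qed
next
  fix F assume "finite F \<and> F \<subseteq> topspace T"
  then have "\<forall>i\<in>I. \<exists>U\<in>\<U> i. F \<subseteq> U" using om by (simp add: omega_cover_def)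
  then obtain f where "\<forall>i\<in>I. f i \<in> \<U> i \<and> F \<subseteq> f i" by metis
  then show "\<exists>U\<in>{\<Inter> (f ` I) | f. \<forall>i\<in>I. f i \<in> \<U> i}. F \<subseteq> U" by blast
qed

lemma omega_cover_Diff_finite:
  assumes om: "omega_cover T \<U>" and "finite \<G>"
  shows "omega_cover T (\<U> - \<G>)"
  unfolding omega_cover_def
proof (intro conjI ballI allI impI)
  show "openin T W" if "W \<in> \<U> - \<G>" for W
    using om that by (simp add: omega_cover_def)
  show "topspace T \<notin> \<U> - \<G>" using om by (simp add: omega_cover_def)
next
  fix F assume F: "finite F \<and> F \<subseteq> topspace T"
  have "\<exists>x\<in>topspace T. x \<notin> W" if "W \<in> \<U> \<inter> \<G>" for W
  proof -
    have "W \<subseteq> topspace T" "W \<noteq> topspace T"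
      using om that by (auto simp: omega_cover_def openin_subset)
    then show ?thesis by blast
  qed
  then obtain x where x: "\<And>W. W \<in> \<U> \<inter> \<G> \<Longrightarrow> x W \<in> topspace T \<and> x W \<notin> W"
    by metis
  \<comment> \<open>A member of \<open>\<U>\<close> containing one witness point outside each member of \<open>\<G>\<close> avoids \<open>\<G>\<close>.\<close>
  have "finite (F \<union> x ` (\<U> \<inter> \<G>))" "F \<union> x ` (\<U> \<inter> \<G>) \<subseteq> topspace T"
    using F x \<open>finite \<G>\<close> by auto
  then obtain W where "W \<in> \<U>" "F \<union> x ` (\<U> \<inter> \<G>) \<subseteq> W"
    using om unfolding omega_cover_def by blast
  with x show "\<exists>W\<in>\<U> - \<G>. F \<subseteq> W" by blast
qed

lemma omega_cover_if_refines:
  assumes "omega_cover T \<V>"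
    and "\<And>W. W \<in> \<W> \<Longrightarrow> openin T W" "topspace T \<notin> \<W>"
    and "\<And>V. V \<in> \<V> \<Longrightarrow> \<exists>W\<in>\<W>. V \<subseteq> W"
  shows "omega_cover T \<W>"
  using assms unfolding omega_cover_def by (meson subset_trans)

lemma selector_refining_small_family:
  assumes "finite I" "finite \<F>" "card \<F> \<le> card I"
    and \<F>: "\<F> \<subseteq> {\<Inter> (f ` I) | f. \<forall>i\<in>I. f i \<in> \<A> i}"
    and nonempty: "\<And>i. \<A> i \<noteq> {}"
  obtains s where "\<And>i. s i \<in> \<A> i" "\<And>W. W \<in> \<F> \<Longrightarrow> \<exists>i\<in>I. W \<subseteq> s i"
proof -
  obtain g where g: "g ` \<F> \<subseteq> I" "inj_on g \<F>"
    using card_le_inj[OF \<open>finite \<F>\<close> \<open>finite I\<close> \<open>card \<F> \<le> card I\<close>] by blast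
  have "\<forall>W\<in>\<F>. \<exists>f. W = \<Inter> (f ` I) \<and> (\<forall>i\<in>I. f i \<in> \<A> i)" using \<F> by blast
  then obtain r where r: "\<forall>W\<in>\<F>. W = \<Inter> (r W ` I) \<and> (\<forall>i\<in>I. r W i \<in> \<A> i)"
    by (rule bchoice[THEN exE])
  define s where
    "s i = (if i \<in> g ` \<F> then r (inv_into \<F> g i) i else (SOME U. U \<in> \<A> i))" for i
  show thesis
  proof
    show "s i \<in> \<A> i" for i
    proof (cases "i \<in> g ` \<F>")
      case True
      then have "inv_into \<F> g i \<in> \<F>" "i \<in> I" using g by (auto intro: inv_into_into)
      then show ?thesis using r True by (simp add: s_def)
    next
      case False
      then show ?thesis using nonempty[of i] by (simp add: s_def some_in_eq)
    qed
    show "\<exists>i\<in>I. W \<subseteq> s i" if "W \<in> \<F>" for W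
    proof
      show "g W \<in> I" using g that by blast
      have "s (g W) = r W (g W)" using g that by (simp add: s_def)
      then show "W \<subseteq> s (g W)" using r \<open>g W \<in> I\<close> that by blast
    qed
  qed
qed

definition block_intersections :: "(nat \<Rightarrow> 'a set set) \<Rightarrow> nat \<Rightarrow> 'a set set" where
  "block_intersections \<U> n = {\<Inter> (f ` {..n}) | f. \<forall>i\<in>{..n}. f i \<in> \<U> (prod_encode (n, i))}"

lemma omega_cover_block_intersections:
  "(\<And>m. omega_cover T (\<U> m)) \<Longrightarrow> omega_cover T (block_intersections \<U> n)"
  unfolding block_intersections_def by (intro omega_cover_INT) auto

lemma selector_refining_blocks:
  assumes nonempty: "\<And>m. \<U> m \<noteq> {}"
    and \<F>: "\<And>n. \<F> n \<subseteq> block_intersections \<U> n" "\<And>n. finite (\<F> n)" "\<And>n. card (\<F> n) \<le> k"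
  obtains S where "\<And>m. S m \<in> \<U> m" "\<And>n W. k \<le> n \<Longrightarrow> W \<in> \<F> n \<Longrightarrow> \<exists>m. W \<subseteq> S m"
proof -
  have "\<exists>s. (\<forall>i. s i \<in> \<U> (prod_encode (n, i))) \<and> (k \<le> n \<longrightarrow> (\<forall>W\<in>\<F> n. \<exists>i. W \<subseteq> s i))"
    for n
  proof (cases "k \<le> n")
    case True
    then have card: "card (\<F> n) \<le> card {..n}" using \<F>(3)[of n] by simp
    have sub: "\<F> n \<subseteq> {\<Inter> (f ` {..n}) | f. \<forall>i\<in>{..n}. f i \<in> \<U> (prod_encode (n, i))}"
      using \<F>(1)[of n] by (simp only: block_intersections_def)
    obtain s where "\<And>i. s i \<in> \<U> (prod_encode (n, i))"
      and "\<And>W. W \<in> \<F> n \<Longrightarrow> \<exists>i\<in>{..n}. W \<subseteq> s i"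
      using selector_refining_small_family[OF finite_atMost \<F>(2) card sub nonempty] by blast
    then show ?thesis by blast
  next
    case False
    then show ?thesis
      using nonempty by (intro exI[of _ "\<lambda>i. SOME U. U \<in> \<U> (prod_encode (n, i))"]) (simp add: some_in_eq)
  qed
  then have "\<forall>n. \<exists>s. (\<forall>i. s i \<in> \<U> (prod_encode (n, i))) \<and> (k \<le> n \<longrightarrow> (\<forall>W\<in>\<F> n. \<exists>i. W \<subseteq> s i))"
    by blast
  then obtain s where s: "\<forall>n. (\<forall>i. s n i \<in> \<U> (prod_encode (n, i))) \<and>
      (k \<le> n \<longrightarrow> (\<forall>W\<in>\<F> n. \<exists>i. W \<subseteq> s n i))"
    by (rule choice[THEN exE])
  show thesis
  proof (rule that[of "\<lambda>m. case_prod s (prod_decode m)"])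
    show "case_prod s (prod_decode m) \<in> \<U> m" for m
    proof (cases "prod_decode m")
      case (Pair n i)
      then have "m = prod_encode (n, i)" by (metis prod_decode_inverse)
      with Pair s show ?thesis by simp
    qed
    show "\<exists>m. W \<subseteq> case_prod s (prod_decode m)" if "k \<le> n" "W \<in> \<F> n" for n W
    proof -
      have "\<forall>W\<in>\<F> n. \<exists>i. W \<subseteq> s n i" using s \<open>k \<le> n\<close> by blast
      then obtain i where "W \<subseteq> s n i" using \<open>W \<in> \<F> n\<close> by blast
      then have "W \<subseteq> case_prod s (prod_decode (prod_encode (n, i)))" by simp
      then show ?thesis by blast
    qed
  qed
qed

lemma omega_cover_range_if_refines_tail:
  fixes k :: nat
  assumes om: "\<And>m. omega_cover T (\<U> m)" and S: "\<And>m. S m \<in> \<U> m"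
    and om\<F>: "omega_cover T (\<Union>n. \<F> n)" and fin: "\<And>n. finite (\<F> n)"
    and refines: "\<And>n W. k \<le> n \<Longrightarrow> W \<in> \<F> n \<Longrightarrow> \<exists>m. W \<subseteq> S m"
  shows "omega_cover T (range S)"
proof -
  have "omega_cover T ((\<Union>n. \<F> n) - (\<Union>n<k. \<F> n))"
    by (intro omega_cover_Diff_finite om\<F> finite_UN_I fin) simp
  then show ?thesis
  proof (rule omega_cover_if_refines)
    show "openin T W" if "W \<in> range S" for W
    proof -
      obtain m where "W = S m" using \<open>W \<in> range S\<close> by blast
      then show ?thesis using om[of m] S[of m] by (simp add: omega_cover_def)
    qed
    show "topspace T \<notin> range S"
      using om S by (force simp: omega_cover_def)
    show "\<exists>W\<in>range S. V \<subseteq> W" if V: "V \<in> (\<Union>n. \<F> n) - (\<Union>n<k. \<F> n)" for V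
    proof -
      obtain n where n: "V \<in> \<F> n" using V by blast
      moreover have "k \<le> n" using n V by (meson DiffD2 UN_I lessThan_iff not_le)
      ultimately obtain m where "V \<subseteq> S m" using refines by blast
      then show ?thesis by blast
    qed
  qed
qed

theorem corollary3p4:
  fixes T :: "'a topology"
  assumes "\<forall>\<U> :: nat \<Rightarrow> 'a set set. (\<forall>n. omega_cover T (\<U> n)) \<longrightarrow>
             (\<exists>(k::nat) (\<F> :: nat \<Rightarrow> 'a set set). k > 0 \<and>
                (\<forall>n. \<F> n \<subseteq> \<U> n \<and> finite (\<F> n) \<and> card (\<F> n) \<le> k) \<and>
                omega_cover T (\<Union>n. \<F> n))"
  shows "S1_Omega_Omega T"
  unfolding S1_Omega_Omega_def
proof (intro allI impI)
  fix \<U> :: "nat \<Rightarrow> 'a set set"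
  assume "\<forall>n. omega_cover T (\<U> n)"
  then have om: "\<And>m. omega_cover T (\<U> m)" by blast
  then have "\<forall>n. omega_cover T (block_intersections \<U> n)"
    by (blast intro: omega_cover_block_intersections)
  with assms obtain k \<F> where
      \<F>: "\<forall>n. \<F> n \<subseteq> block_intersections \<U> n \<and> finite (\<F> n) \<and> card (\<F> n) \<le> k"
    and om\<F>: "omega_cover T (\<Union>n. \<F> n)"
    by blast
  then have sub: "\<And>n. \<F> n \<subseteq> block_intersections \<U> n"
    and fin: "\<And>n. finite (\<F> n)" and card: "\<And>n. card (\<F> n) \<le> k"
    by blast+
  have "\<And>m. \<U> m \<noteq> {}" using om by (rule omega_cover_nonempty)
  then obtain S where S: "\<And>m. S m \<in> \<U> m"
    and refines: "\<And>n W. k \<le> n \<Longrightarrow> W \<in> \<F> n \<Longrightarrow> \<exists>m. W \<subseteq> S m"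
    using selector_refining_blocks[OF _ sub fin card] by blast
  have "omega_cover T (range S)"
    by (rule omega_cover_range_if_refines_tail[OF om S om\<F> fin refines])
  with S show "\<exists>U. (\<forall>n. U n \<in> \<U> n) \<and> omega_cover T (range U)" by blast
qed

end
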